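(* Let $\Gamma\subset\mathbb R^{n+1}$ be an open, convex, symmetric proper subcone with vertex at the origin containing $\Gamma^+$, and $f\in C^\infty(\Gamma)\cap C^0(\bar\Gamma)$ symmetric with $f_\ell=\partial f/\partial\lambda_\ell>0$ in $\Gamma$, $f$ concave in $\Gamma$, and $\sum_{\ell=1}^{n+1}f_\ell\lambda_\ell\ge-K_0(1+\sum_{\ell=1}^{n+1}f_\ell)$ for all $\lambda\in\Gamma$, for a constant $K_0$. Let $u$ be an admissible solution of $f(\lambda[\nabla^2u+\chi],-u_t)=\psi(x,t)$ in $M_T$, and at a point of $M_T$ let $\lambda=(\lambda_1,\dots,\lambda_n)=\lambda(U)$ be the eigenvalues of $U=\nabla^2u+\chi$, with $f_i=f_i(\lambda,-u_t)$ for $1\le i\le n$ and $f_\tau=f_{n+1}(\lambda,-u_t)$. Then for any index $1\le r\le n$ and any $\epsilon>0$, $$\sum_{i=1}^n f_i|\lambda_i|\le\epsilon\sum_{i\ne r}f_i\lambda_i^2+C\big(\epsilon,|u_t|,K_0,\sup_{M_T}\psi\big)\Big(1+\sum_{i=1}^n f_i+f_\tau\Big),$$ where the constant depends only on $\epsilon$, $|u_t|$, $K_0$, $\sup_{M_T}\psi$ (and $f$).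
   Context: $(M^n,g)$ is a compact Riemannian manifold with smooth boundary, $M_T=M\times(0,T]$, $\chi$ a smooth $(0,2)$-tensor, $\nabla^2u$ the spatial Hessian and $u_t$ the time derivative; eigenvalues are with respect to $g$. $\Gamma^+=\{\lambda\in\mathbb R^{n+1}:\lambda_\ell>0 \ \forall\ell\}$. $u$ admissible means $(\lambda[\nabla^2u+\chi],-u_t)\in\Gamma$ in $M_T$. *)

theory Defs
  imports "HOL-Analysis.Analysis"
begin

definition pd :: "(real^'a \<Rightarrow> real) \<Rightarrow> real^'a \<Rightarrow> 'a \<Rightarrow> real" where
  "pd f x l = deriv (\<lambda>t. f (x + t *\<^sub>R axis l 1)) 0"

fun iter_pd :: "'a list \<Rightarrow> (real^'a \<Rightarrow> real) \<Rightarrow> real^'a \<Rightarrow> real" where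
  "iter_pd [] f = f"
| "iter_pd (l # ls) f = (\<lambda>x. pd (iter_pd ls f) x l)"

definition smooth_on :: "(real^'a) set \<Rightarrow> (real^'a \<Rightarrow> real) \<Rightarrow> bool" where
  "smooth_on S f \<longleftrightarrow> (\<forall>ls. continuous_on S (iter_pd ls f) \<and>
     (\<forall>x\<in>S. \<forall>l. (\<lambda>t. iter_pd ls f (x + t *\<^sub>R axis l 1)) differentiable (at 0)))"

definition permv :: "('a \<Rightarrow> 'a) \<Rightarrow> real^'a \<Rightarrow> real^'a" where
  "permv p x = (\<chi> i. x $ p i)"

definition positive_cone :: "(real^'a) set" where
  "positive_cone = {x. \<forall>i. x $ i > 0}"

end

theory Submission
  imports Defs
begin

text \<open>Testing concavity against the point \<open>(1, \<dots>, 1)\<close> of the positive cone bounds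
  \<open>\<Sum> f\<^sub>\<ell> \<lambda>\<^sub>\<ell>\<close> from above by \<open>\<Psi> - f(1, \<dots>, 1) + \<Sum> f\<^sub>\<ell>\<close>, and the structure condition bounds it
  from below, so \<open>|\<Sum> f\<^sub>\<ell> \<lambda>\<^sub>\<ell>| \<le> C (1 + \<Sum> f\<^sub>\<ell>)\<close>; the time term \<open>f\<^sub>\<tau> \<lambda>\<^sub>\<tau>\<close> is controlled by the bound
  on \<open>u\<^sub>t\<close>. Finally \<open>|\<lambda>\<^sub>i| \<le> \<sigma> \<lambda>\<^sub>i + \<epsilon> \<lambda>\<^sub>i\<^sup>2 + 1/\<epsilon>\<close> with the common sign \<open>\<sigma>\<close> of \<open>\<lambda>\<^sub>r\<close>, while
  \<open>|\<lambda>\<^sub>r| = \<sigma> \<lambda>\<^sub>r\<close> exactly, turns \<open>\<Sum>\<^sub>i f\<^sub>i |\<lambda>\<^sub>i|\<close> into \<open>\<sigma> \<Sum>\<^sub>i f\<^sub>i \<lambda>\<^sub>i\<close> plus the admissible error terms.\<close>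

lemma eventually_at_right_in_open_along:
  fixes x v :: "'a::real_normed_vector"
  assumes "open G" and "x \<in> G"
  shows "eventually (\<lambda>t. x + t *\<^sub>R v \<in> G) (at_right 0)"
proof -
  have "((\<lambda>t. x + t *\<^sub>R v) \<longlongrightarrow> x + 0 *\<^sub>R v) (at_right 0)"
    by (intro tendsto_intros)
  with assms show ?thesis
    by (intro topological_tendstoD) auto
qed

lemma difference_quotient_tendsto:
  fixes g :: "real \<Rightarrow> real"
  assumes "g differentiable (at 0)"
  shows "((\<lambda>t. (g (c * t) - g 0) / t) \<longlongrightarrow> c * deriv g 0) (at 0)"
proof -
  have "(g has_real_derivative deriv g 0) (at (c * 0))"
    using assms by (simp add: DERIV_deriv_iff_real_differentiable)
  from DERIV_chain2[OF this DERIV_cmult_Id]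
  have "((\<lambda>t. g (c * t)) has_real_derivative deriv g 0 * c) (at 0)" .
  then show ?thesis
    by (simp add: has_field_derivative_iff mult.commute)
qed

lemma concave_on_backward_secant:
  fixes f :: "'a::real_vector \<Rightarrow> real"
  assumes "concave_on G f" and "y \<in> G" and "x - t *\<^sub>R (y - x) \<in> G" and "t \<ge> 0"
  shows "t * (f y - f x) \<le> f x - f (x - t *\<^sub>R (y - x))"
proof -
  \<comment> \<open>\<open>x\<close> lies on the segment from \<open>x - t (y - x)\<close> to \<open>y\<close>, with weight \<open>t / (1 + t)\<close> on \<open>y\<close>.\<close>
  define s where "s = t / (1 + t)"
  have s: "0 \<le> s" "s \<le> 1"
    using assms(4) by (auto simp: s_def)
  have weights: "(1 + t) * (1 - s) = 1" "(1 + t) * s = t"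
    using assms(4) by (auto simp: s_def field_simps)
  have "(1 - s) *\<^sub>R (x - t *\<^sub>R (y - x)) + s *\<^sub>R y
      = ((1 + t) * (1 - s)) *\<^sub>R x + (s - t * (1 - s)) *\<^sub>R y"
    by (simp add: algebra_simps)
  also have "\<dots> = x"
    using weights by (simp add: algebra_simps)
  finally have "(1 - s) * f (x - t *\<^sub>R (y - x)) + s * f y \<le> f x"
    using concave_onD[OF assms(1) s assms(3,2)] by simp
  then have "(1 + t) * ((1 - s) * f (x - t *\<^sub>R (y - x)) + s * f y) \<le> (1 + t) * f x"
    using assms(4) by (intro mult_left_mono) auto
  moreover have "(1 + t) * ((1 - s) * f (x - t *\<^sub>R (y - x)) + s * f y)
      = ((1 + t) * (1 - s)) * f (x - t *\<^sub>R (y - x)) + ((1 + t) * s) * f y"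
    by (simp only: distrib_left mult.assoc)
  ultimately show ?thesis
    unfolding weights by (simp add: algebra_simps)
qed

lemma concave_on_uniform_average:
  fixes f :: "'a::real_vector \<Rightarrow> real"
  assumes "concave_on G f" and "finite I" and "I \<noteq> {}" and "\<And>i. i \<in> I \<Longrightarrow> p i \<in> G"
  shows "(\<Sum>i\<in>I. f (p i)) / card I \<le> f ((1 / card I) *\<^sub>R (\<Sum>i\<in>I. p i))"
  using concave_on_sum[OF assms(2,3,1), of "\<lambda>_. 1 / card I" p] assms(2-4)
  by (simp add: scaleR_sum_right sum_divide_distrib)

text \<open>\<open>x - t (y - x)\<close> is the average of the axis points \<open>x + c\<^sub>l t e\<^sub>l\<close>.\<close>
lemma concave_on_secant_le_axis_average:
  fixes f :: "real^'n \<Rightarrow> real" and x y :: "real^'n"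
  defines "c l \<equiv> - (real CARD('n) * (y $ l - x $ l))"
  assumes "concave_on G f" and "y \<in> G" and "t \<ge> 0" and "x - t *\<^sub>R (y - x) \<in> G"
    and axes: "\<And>l. x + (c l * t) *\<^sub>R axis l 1 \<in> G"
  shows "t * (f y - f x) \<le> (\<Sum>l\<in>UNIV. f x - f (x + (c l * t) *\<^sub>R axis l 1)) / CARD('n)"
proof -
  define N where "N = real CARD('n)"
  have N: "N > 0" by (simp add: N_def)
  have "(\<Sum>l\<in>UNIV. (c l * t) *\<^sub>R axis l 1) = - ((N * t) *\<^sub>R (y - x))"
    by (simp add: vec_eq_iff axis_def if_distrib c_def N_def cong: if_cong)
  then have "(\<Sum>l\<in>UNIV. x + (c l * t) *\<^sub>R axis l 1) = N *\<^sub>R x - (N * t) *\<^sub>R (y - x)"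
    by (simp add: sum.distrib sum_constant_scaleR N_def del: sum_constant)
  then have "(1 / N) *\<^sub>R (\<Sum>l\<in>UNIV. x + (c l * t) *\<^sub>R axis l 1) = x - t *\<^sub>R (y - x)"
    using N by (simp add: scaleR_diff_right)
  then have "(\<Sum>l\<in>UNIV. f (x + (c l * t) *\<^sub>R axis l 1)) / N \<le> f (x - t *\<^sub>R (y - x))"
    using concave_on_uniform_average[OF assms(2), of UNIV "\<lambda>l. x + (c l * t) *\<^sub>R axis l 1"] axes
    by (simp add: N_def)
  moreover have "t * (f y - f x) \<le> f x - f (x - t *\<^sub>R (y - x))"
    using concave_on_backward_secant[OF assms(2,3,5,4)] .
  moreover have "(\<Sum>l\<in>UNIV. f x - f (x + (c l * t) *\<^sub>R axis l 1)) / N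
      = f x - (\<Sum>l\<in>UNIV. f (x + (c l * t) *\<^sub>R axis l 1)) / N"
    using N by (simp add: sum_subtractf N_def field_simps)
  ultimately show ?thesis
    unfolding N_def by linarith
qed

text \<open>Only partial derivatives at \<open>x\<close> are available, hence the detour through axis averages
  instead of a tangent inequality for a Fr\'echet derivative.\<close>
lemma concave_on_le_partial_linearization:
  fixes f :: "real^'n \<Rightarrow> real"
  assumes "open G" and "concave_on G f" and "x \<in> G" and "y \<in> G"
    and partial: "\<And>l. (\<lambda>t. f (x + t *\<^sub>R axis l 1)) differentiable (at 0)"
  shows "f y \<le> f x + (\<Sum>l\<in>UNIV. pd f x l * (y $ l - x $ l))"
proof -
  define N where "N = real CARD('n)"
  have N: "N > 0" by (simp add: N_def)
  define c where "c l = - (N * (y $ l - x $ l))" for l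
  define R where "R t = (\<Sum>l\<in>UNIV. (f x - f (x + (c l * t) *\<^sub>R axis l 1)) / t) / N" for t
  have "(R \<longlongrightarrow> (\<Sum>l\<in>UNIV. - (c l * pd f x l)) / N) (at_right 0)"
  proof -
    have forward: "((\<lambda>t. (f (x + (c l * t) *\<^sub>R axis l 1) - f x) / t) \<longlongrightarrow> c l * pd f x l) (at_right 0)"
      for l
      using difference_quotient_tendsto[OF partial[of l], of "c l"]
      by (auto simp: pd_def intro: tendsto_mono[OF at_le])
    have "((\<lambda>t. (f x - f (x + (c l * t) *\<^sub>R axis l 1)) / t) \<longlongrightarrow> - (c l * pd f x l))
        (at_right 0)" for l
      using tendsto_minus[OF forward[of l]] by (simp add: minus_divide_left)
    then show ?thesis
      unfolding R_def using N by (intro tendsto_divide tendsto_sum) auto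
  qed
  moreover have "(\<Sum>l\<in>UNIV. - (c l * pd f x l)) / N = (\<Sum>l\<in>UNIV. pd f x l * (y $ l - x $ l))"
    using N by (simp add: c_def sum_divide_distrib mult.commute)
  moreover have "eventually (\<lambda>t. f y - f x \<le> R t) (at_right 0)"
  proof -
    have "eventually (\<lambda>t. t > 0 \<and> x + t *\<^sub>R (x - y) \<in> G
        \<and> (\<forall>l. x + t *\<^sub>R (c l *\<^sub>R axis l 1) \<in> G)) (at_right 0)"
      using assms(1,3)
      by (intro eventually_conj eventually_at_right_less eventually_all_finite
          eventually_at_right_in_open_along)
    then show ?thesis
    proof eventually_elim
      case (elim t)
      then have "t > 0" and "x - t *\<^sub>R (y - x) \<in> G" and "\<And>l. x + (c l * t) *\<^sub>R axis l 1 \<in> G"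
        by (auto simp: algebra_simps)
      then have "t * (f y - f x) \<le> (\<Sum>l\<in>UNIV. f x - f (x + (c l * t) *\<^sub>R axis l 1)) / N"
        using concave_on_secant_le_axis_average[OF assms(2,4)] by (simp add: c_def N_def)
      moreover have "R t = (\<Sum>l\<in>UNIV. f x - f (x + (c l * t) *\<^sub>R axis l 1)) / N / t"
        by (simp add: R_def sum_divide_distrib mult.commute)
      ultimately show ?case
        using \<open>t > 0\<close> by (metis pos_le_divide_eq mult.commute)
    qed
  qed
  ultimately show ?thesis
    using tendsto_le[OF trivial_limit_at_right_real _ tendsto_const] by fastforce
qed

lemma two_abs_le_square_plus_inverse:
  fixes \<epsilon> u :: real
  assumes "\<epsilon> > 0"
  shows "2 * \<bar>u\<bar> \<le> \<epsilon> * u\<^sup>2 + 1 / \<epsilon>"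
proof -
  have "0 \<le> (\<epsilon> * \<bar>u\<bar> - 1)\<^sup>2 / \<epsilon>"
    using assms by simp
  also have "\<dots> = \<epsilon> * u\<^sup>2 + 1 / \<epsilon> - 2 * \<bar>u\<bar>"
    using assms by (simp add: field_simps power2_eq_square)
  finally show ?thesis by simp
qed

lemma mult_le_abs_if_abs_le_one:
  fixes s u :: real
  assumes "\<bar>s\<bar> \<le> 1"
  shows "s * u \<le> \<bar>u\<bar>"
proof -
  have "s * u \<le> \<bar>s\<bar> * \<bar>u\<bar>"
    by (metis abs_ge_self abs_mult)
  also have "\<dots> \<le> \<bar>u\<bar>"
    using mult_right_mono[OF assms abs_ge_zero] by simp
  finally show ?thesis .
qed

lemma abs_le_signed_plus_square:
  fixes \<epsilon> s u :: real
  assumes "\<epsilon> > 0" and "\<bar>s\<bar> \<le> 1"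
  shows "\<bar>u\<bar> \<le> s * u + \<epsilon> * u\<^sup>2 + 1 / \<epsilon>"
proof -
  have "- s * u \<le> \<bar>u\<bar>"
    using assms(2) by (intro mult_le_abs_if_abs_le_one) simp
  with two_abs_le_square_plus_inverse[OF assms(1), of u] show ?thesis
    by linarith
qed

text \<open>The sign is chosen so that the \<open>r\<close>-th term needs no quadratic compensation.\<close>
lemma weighted_abs_sum_le:
  fixes a x :: "'i \<Rightarrow> real"
  assumes "finite S" and "r \<in> S" and "\<And>i. i \<in> S \<Longrightarrow> a i \<ge> 0" and "\<epsilon> > 0"
  shows "(\<Sum>i\<in>S. a i * \<bar>x i\<bar>)
    \<le> \<bar>\<Sum>i\<in>S. a i * x i\<bar> + \<epsilon> * (\<Sum>i\<in>S - {r}. a i * (x i)\<^sup>2) + (\<Sum>i\<in>S - {r}. a i) / \<epsilon>"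
proof -
  define s where "s = sgn (x r)"
  have s: "\<bar>s\<bar> \<le> 1" "\<bar>x r\<bar> = s * x r"
    by (auto simp: s_def sgn_if)
  have termwise: "a i * \<bar>x i\<bar> \<le> s * (a i * x i) + \<epsilon> * (a i * (x i)\<^sup>2) + a i / \<epsilon>" if "i \<in> S" for i
    using mult_left_mono[OF abs_le_signed_plus_square[OF assms(4) s(1), of "x i"] assms(3)[OF that]]
    by (simp add: algebra_simps)
  have "(\<Sum>i\<in>S. a i * \<bar>x i\<bar>) = s * (a r * x r) + (\<Sum>i\<in>S - {r}. a i * \<bar>x i\<bar>)"
    using assms(1,2) by (simp add: sum.remove s(2))
  also have "\<dots> \<le> s * (a r * x r)
      + (\<Sum>i\<in>S - {r}. s * (a i * x i) + \<epsilon> * (a i * (x i)\<^sup>2) + a i / \<epsilon>)"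
    using termwise by (intro add_left_mono sum_mono) auto
  also have "\<dots> = s * (\<Sum>i\<in>S. a i * x i)
      + \<epsilon> * (\<Sum>i\<in>S - {r}. a i * (x i)\<^sup>2) + (\<Sum>i\<in>S - {r}. a i) / \<epsilon>"
    using assms(1,2)
    by (simp add: sum.distrib sum.remove sum_distrib_left sum_divide_distrib algebra_simps)
  also have "s * (\<Sum>i\<in>S. a i * x i) \<le> \<bar>\<Sum>i\<in>S. a i * x i\<bar>"
    using s(1) by (rule mult_le_abs_if_abs_le_one)
  finally show ?thesis by simp
qed

lemma abs_sum_pd_mult_le:
  fixes f :: "real^'n \<Rightarrow> real"
  assumes "open G" and "concave_on G f" and "x \<in> G" and one: "(\<chi> i. 1) \<in> G"
    and partial: "\<And>l. (\<lambda>t. f (x + t *\<^sub>R axis l 1)) differentiable (at 0)"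
    and pd_nonneg: "\<And>l. pd f x l \<ge> 0" and "f x \<le> \<Psi>"
    and lower: "(\<Sum>l\<in>UNIV. pd f x l * x $ l) \<ge> - K\<^sub>0 * (1 + (\<Sum>l\<in>UNIV. pd f x l))"
  shows "\<bar>\<Sum>l\<in>UNIV. pd f x l * x $ l\<bar>
    \<le> (\<bar>\<Psi> - f (\<chi> i. 1)\<bar> + \<bar>K\<^sub>0\<bar> + 1) * (1 + (\<Sum>l\<in>UNIV. pd f x l))"
proof -
  define A where "A = (\<Sum>l\<in>UNIV. pd f x l)"
  have A: "A \<ge> 0"
    unfolding A_def using pd_nonneg by (simp add: sum_nonneg)
  have "f (\<chi> i. 1) \<le> f x + (\<Sum>l\<in>UNIV. pd f x l * (1 - x $ l))"
    using concave_on_le_partial_linearization[OF assms(1-3) one partial] by simp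
  then have "(\<Sum>l\<in>UNIV. pd f x l * x $ l) \<le> \<bar>\<Psi> - f (\<chi> i. 1)\<bar> + A"
    using \<open>f x \<le> \<Psi>\<close> by (simp add: A_def right_diff_distrib sum_subtractf)
  moreover have "K\<^sub>0 * (1 + A) \<le> \<bar>K\<^sub>0\<bar> * (1 + A)"
    using A by (intro mult_right_mono) auto
  then have "- (\<Sum>l\<in>UNIV. pd f x l * x $ l) \<le> \<bar>K\<^sub>0\<bar> * (1 + A)"
    using lower by (simp add: A_def)
  moreover have "\<bar>\<Psi> - f (\<chi> i. 1)\<bar> + A \<le> (\<bar>\<Psi> - f (\<chi> i. 1)\<bar> + \<bar>K\<^sub>0\<bar> + 1) * (1 + A)"
    and "\<bar>K\<^sub>0\<bar> * (1 + A) \<le> (\<bar>\<Psi> - f (\<chi> i. 1)\<bar> + \<bar>K\<^sub>0\<bar> + 1) * (1 + A)"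
    using A by (simp_all add: algebra_simps)
  ultimately show ?thesis
    unfolding A_def by linarith
qed

lemma weighted_abs_sum_off_coordinate_le:
  fixes a x :: "'n::finite \<Rightarrow> real"
  assumes a: "\<And>l. a l \<ge> 0" and "\<epsilon> > 0" and "r \<noteq> \<tau>" and "\<bar>x \<tau>\<bar> \<le> B"
    and total: "\<bar>\<Sum>l\<in>UNIV. a l * x l\<bar> \<le> C\<^sub>0 * (1 + (\<Sum>l\<in>UNIV. a l))"
  shows "(\<Sum>i\<in>UNIV - {\<tau>}. a i * \<bar>x i\<bar>)
    \<le> \<epsilon> * (\<Sum>i\<in>UNIV - {\<tau>, r}. a i * (x i)\<^sup>2)
       + (C\<^sub>0 + \<bar>B\<bar> + 1 / \<epsilon>) * (1 + (\<Sum>i\<in>UNIV - {\<tau>}. a i) + a \<tau>)"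
proof -
  let ?S = "UNIV - {\<tau>}"
  define F where "F = (\<Sum>i\<in>?S. a i)"
  have F: "F \<ge> 0"
    using a by (simp add: F_def sum_nonneg)
  have split: "(\<Sum>l\<in>UNIV. g l) = g \<tau> + (\<Sum>i\<in>?S. g i)" for g :: "'n \<Rightarrow> real"
    by (simp add: sum.remove)
  have "\<bar>a \<tau> * x \<tau>\<bar> \<le> a \<tau> * \<bar>B\<bar>"
    using a[of \<tau>] \<open>\<bar>x \<tau>\<bar> \<le> B\<close> by (simp add: abs_mult mult_left_mono)
  with total have "\<bar>\<Sum>i\<in>?S. a i * x i\<bar> \<le> C\<^sub>0 * (1 + a \<tau> + F) + a \<tau> * \<bar>B\<bar>"
    using split[of "\<lambda>l. a l * x l"] split[of a] by (simp add: F_def add.assoc)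
  moreover have "(\<Sum>i\<in>?S - {r}. a i) / \<epsilon> \<le> F / \<epsilon>"
    unfolding F_def using a \<open>\<epsilon> > 0\<close> by (intro divide_right_mono sum_mono2) auto
  moreover have "a \<tau> * \<bar>B\<bar> + F / \<epsilon> \<le> (\<bar>B\<bar> + 1 / \<epsilon>) * (1 + F + a \<tau>)"
    using F a[of \<tau>] \<open>\<epsilon> > 0\<close> by (simp add: algebra_simps)
  moreover have "?S - {r} = UNIV - {\<tau>, r}"
    by auto
  ultimately show ?thesis
    using weighted_abs_sum_le[of ?S r a \<epsilon> x] a \<open>r \<noteq> \<tau>\<close> \<open>\<epsilon> > 0\<close>
    by (simp add: F_def algebra_simps)
qed

lemma smooth_on_partial_differentiable:
  assumes "smooth_on S f" and "x \<in> S"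
  shows "(\<lambda>t. f (x + t *\<^sub>R axis l 1)) differentiable (at 0)"
  using assms unfolding smooth_on_def by (metis iter_pd.simps(1))

theorem proposition2p3:
  fixes \<Gamma> :: "(real^'a) set" and f :: "real^'a \<Rightarrow> real"
    and \<tau> :: 'a and K\<^sub>0 :: real
  assumes n_pos: "CARD('a) \<ge> 2"
    and open_G: "open \<Gamma>" and convex_G: "convex \<Gamma>"
    and cone_G: "\<And>x t. x \<in> \<Gamma> \<Longrightarrow> t > 0 \<Longrightarrow> t *\<^sub>R x \<in> \<Gamma>"
    and sym_G: "\<And>p x. p permutes UNIV \<Longrightarrow> x \<in> \<Gamma> \<Longrightarrow> permv p x \<in> \<Gamma>"
    and proper_G: "\<Gamma> \<noteq> UNIV"
    and pos_sub: "positive_cone \<subseteq> \<Gamma>"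
    and smooth_f: "smooth_on \<Gamma> f"
    and cont_f: "continuous_on (closure \<Gamma>) f"
    and sym_f: "\<And>p x. p permutes UNIV \<Longrightarrow> x \<in> \<Gamma> \<Longrightarrow> f (permv p x) = f x"
    and fpos: "\<And>x l. x \<in> \<Gamma> \<Longrightarrow> pd f x l > 0"
    and concave_f: "concave_on \<Gamma> f"
    and struct: "\<And>x. x \<in> \<Gamma> \<Longrightarrow>
        (\<Sum>l\<in>UNIV. pd f x l * x $ l) \<ge> - K\<^sub>0 * (1 + (\<Sum>l\<in>UNIV. pd f x l))"
  shows "\<forall>\<epsilon>>0. \<forall>B \<Psi>. \<exists>C. \<forall>x\<in>\<Gamma>. \<forall>r. r \<noteq> \<tau> \<longrightarrow> \<bar>x $ \<tau>\<bar> \<le> B \<longrightarrow> f x \<le> \<Psi> \<longrightarrow>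
      (\<Sum>i\<in>UNIV-{\<tau>}. pd f x i * \<bar>x $ i\<bar>)
        \<le> \<epsilon> * (\<Sum>i\<in>UNIV-{\<tau>,r}. pd f x i * (x $ i)\<^sup>2)
           + C * (1 + (\<Sum>i\<in>UNIV-{\<tau>}. pd f x i) + pd f x \<tau>)"
proof (intro allI impI)
  fix \<epsilon> B \<Psi> :: real
  assume "\<epsilon> > 0"
  define C\<^sub>0 where "C\<^sub>0 = \<bar>\<Psi> - f (\<chi> i. 1)\<bar> + \<bar>K\<^sub>0\<bar> + 1"
  have one: "(\<chi> i. 1) \<in> \<Gamma>"
    using pos_sub by (auto simp: positive_cone_def)
  show "\<exists>C. \<forall>x\<in>\<Gamma>. \<forall>r. r \<noteq> \<tau> \<longrightarrow> \<bar>x $ \<tau>\<bar> \<le> B \<longrightarrow> f x \<le> \<Psi> \<longrightarrow>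
      (\<Sum>i\<in>UNIV-{\<tau>}. pd f x i * \<bar>x $ i\<bar>)
        \<le> \<epsilon> * (\<Sum>i\<in>UNIV-{\<tau>,r}. pd f x i * (x $ i)\<^sup>2)
           + C * (1 + (\<Sum>i\<in>UNIV-{\<tau>}. pd f x i) + pd f x \<tau>)"
  proof (intro exI[of _ "C\<^sub>0 + \<bar>B\<bar> + 1 / \<epsilon>"] ballI allI impI)
    fix x r
    assume x: "x \<in> \<Gamma>" and "r \<noteq> \<tau>" and "\<bar>x $ \<tau>\<bar> \<le> B" and "f x \<le> \<Psi>"
    have pd_nonneg: "pd f x l \<ge> 0" for l
      using fpos[OF x] less_imp_le by blast
    have "\<bar>\<Sum>l\<in>UNIV. pd f x l * x $ l\<bar> \<le> C\<^sub>0 * (1 + (\<Sum>l\<in>UNIV. pd f x l))"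
      unfolding C\<^sub>0_def using abs_sum_pd_mult_le[OF open_G concave_f x one
          smooth_on_partial_differentiable[OF smooth_f x] pd_nonneg \<open>f x \<le> \<Psi>\<close> struct[OF x]] .
    then show "(\<Sum>i\<in>UNIV-{\<tau>}. pd f x i * \<bar>x $ i\<bar>)
        \<le> \<epsilon> * (\<Sum>i\<in>UNIV-{\<tau>,r}. pd f x i * (x $ i)\<^sup>2)
           + (C\<^sub>0 + \<bar>B\<bar> + 1 / \<epsilon>) * (1 + (\<Sum>i\<in>UNIV-{\<tau>}. pd f x i) + pd f x \<tau>)"
      using weighted_abs_sum_off_coordinate_le[of "pd f x" \<epsilon> r \<tau> "(($) x)" B C\<^sub>0]
        pd_nonneg \<open>\<epsilon> > 0\<close> \<open>r \<noteq> \<tau>\<close> \<open>\<bar>x $ \<tau>\<bar> \<le> B\<close> by blast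
  qed
qed

end
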